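(* Let $h>0$ satisfy $L_eh^2\le1/9$, where $L_e=L+2\epsilon\tilde L$. Then for all $(x,v),(y,u)\in\mathbb{R}^{Nd}\times\mathbb{R}^{Nd}$, $$\sum_{\ell=1}^N\sup_{0\le s\le h}\big|\!\big|\!\big|(q^\ell_s(x,v),p^\ell_s(x,v))-(q^\ell_s(y,u),p^\ell_s(y,u))\big|\!\big|\!\big|^2\le(1+7L_e^{1/2}h)\sum_{\ell=1}^N\big|\!\big|\!\big|(x^\ell-y^\ell,v^\ell-u^\ell)\big|\!\big|\!\big|^2.$$
   Context: Standing assumptions: $\epsilon\ge0$; $V:\mathbb{R}^d\to\mathbb{R}$, $W:\mathbb{R}^d\times\mathbb{R}^d\to\mathbb{R}$ are $C^1$, $\nabla_1W$ the gradient in the first argument, constants $L>0$, $\tilde L\ge0$ with: (a) $V(0)=0$, $V\ge0$; (b) $|\nabla V(x)-\nabla V(y)|\le L|x-y|$; (d) $W$ symmetric, $|\nabla_1W(x,y)-\nabla_1W(\tilde x,\tilde y)|\le\tilde L(|x-\tilde x|+|y-\tilde y|)$. Points of $\mathbb{R}^{Nd}$: $x=(x^1,\dots,x^N)$. $U(x)=\sum_i\big(V(x^i)+\frac\epsilon{2N}\sum_jW(x^i,x^j)\big)$, $\nabla_iU=\partial U/\partial x^i$. Exact flow $(q_t,p_t)(x,v)$: $\dot q^i_t=p^i_t$, $\dot p^i_t=-\nabla_iU(q_t)$, $(q_0,p_0)=(x,v)$. For $(a,b)\in\mathbb{R}^{2d}$, $|\!|\!|(a,b)|\!|\!|^2=|a|^2+L_e^{-1}|b|^2$.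 *)

theory Defs
  imports "HOL-Analysis.Analysis"
begin

text \<open>Configurations of N particles in R^d: functions nat => 'a, only indices i < N matter.\<close>

definition Upot :: "('a::euclidean_space \<Rightarrow> real) \<Rightarrow> ('a \<Rightarrow> 'a \<Rightarrow> real) \<Rightarrow> real \<Rightarrow> nat \<Rightarrow> (nat \<Rightarrow> 'a) \<Rightarrow> real" where
  "Upot V W eps N x = (\<Sum>i<N. V (x i) + eps / (2 * real N) * (\<Sum>j<N. W (x i) (x j)))"

text \<open>Squared triple norm |||(a,b)|||^2 = |a|^2 + Le^{-1} |b|^2.\<close>
definition tnorm2 :: "real \<Rightarrow> 'a::real_normed_vector \<Rightarrow> 'a \<Rightarrow> real" where
  "tnorm2 Le a b = (norm a)\<^sup>2 + (norm b)\<^sup>2 / Le"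

text \<open>(q,p) solves the Hamiltonian ODE on [0,h] with initial data (x,v); the partial gradient
  nabla_i U is the gradient of z |-> U(x with i-th component replaced by z).\<close>
definition is_flow :: "('a::euclidean_space \<Rightarrow> real) \<Rightarrow> ('a \<Rightarrow> 'a \<Rightarrow> real) \<Rightarrow> real \<Rightarrow> nat \<Rightarrow> real
   \<Rightarrow> (real \<Rightarrow> nat \<Rightarrow> 'a) \<Rightarrow> (real \<Rightarrow> nat \<Rightarrow> 'a) \<Rightarrow> (nat \<Rightarrow> 'a) \<Rightarrow> (nat \<Rightarrow> 'a) \<Rightarrow> bool" where
  "is_flow V W eps N h q p x v \<longleftrightarrow>
     (\<forall>i<N. q 0 i = x i \<and> p 0 i = v i) \<and>
     (\<forall>t\<in>{0..h}. \<forall>i<N.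
        ((\<lambda>s. q s i) has_vector_derivative p t i) (at t within {0..h}) \<and>
        (\<exists>g. (GDERIV (\<lambda>z. Upot V W eps N ((q t)(i := z))) (q t i) :> g) \<and>
             ((\<lambda>s. p s i) has_vector_derivative (- g)) (at t within {0..h})))"

end

theory Submission
  imports Defs
begin

(* Write E_l for the squared triple-norm distance of particle l between the two flows and S for
   their sum. Since the partial gradients of U are Lipschitz, with a mean-field term controlled by
   the average distance of all particles, each E_l satisfies
   E_l' <= 2 sqrt(L_e) E_l + sqrt(L_e)/2 * S/N.
   Summing gives S' <= 5/2 sqrt(L_e) S, so S grows at most like exp(5/2 sqrt(L_e) t); substituting
   this back decouples the particles, and a linear Gronwall argument for each E_l yields the bound,
   since exp(2 tau) + (exp(2 tau) - 1) exp(5/2 tau) / 4 <= 1 + 7 tau for tau = sqrt(L_e) h <= 1/3. *)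

lemma gderiv_lipschitz_remainder_bound:
  fixes f :: "'a::euclidean_space \<Rightarrow> real"
  assumes grad: "\<And>z. GDERIV f z :> G z"
    and lip: "\<And>z z'. norm (G z - G z') \<le> K * norm (z - z')"
  shows "\<bar>f y - f x - (y - x) \<bullet> G x\<bar> \<le> K * (norm (y - x))\<^sup>2"
proof (cases "y = x")
  case True
  then show ?thesis by simp
next
  case False
  define \<gamma> where "\<gamma> t = x + t *\<^sub>R (y - x)" for t
  define \<phi> where "\<phi> t = f (\<gamma> t) - t * ((y - x) \<bullet> G x)" for t
  define \<phi>' where "\<phi>' t s = s * ((y - x) \<bullet> (G (\<gamma> t) - G x))" for t s :: real
  have deriv: "(\<phi> has_derivative \<phi>' t) (at t within S)" for t S
  proof -
    have "(\<gamma> has_derivative (\<lambda>s. s *\<^sub>R (y - x))) (at t within S)"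
      unfolding \<gamma>_def by (auto intro!: derivative_eq_intros)
    from has_derivative_compose[OF this grad[of "\<gamma> t", unfolded gderiv_def]]
    have "((\<lambda>t. f (\<gamma> t)) has_derivative (\<lambda>s. (s *\<^sub>R (y - x)) \<bullet> G (\<gamma> t))) (at t within S)"
      by (simp add: o_def)
    then show ?thesis
      unfolding \<phi>_def \<phi>'_def[abs_def]
      by (auto intro!: derivative_eq_intros simp: algebra_simps)
  qed
  moreover have "continuous_on {0..1} \<phi>"
    by (rule has_derivative_continuous_on[of _ _ \<phi>'], rule deriv)
  ultimately obtain t where t: "t \<in> {0<..<1}" and mvt: "norm (\<phi> 1 - \<phi> 0) \<le> norm (\<phi>' t 1)"
    using mvt_general[of 0 1 \<phi> \<phi>'] by auto
  have "0 \<le> K * norm (y - x)"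
    by (rule order_trans[OF norm_ge_zero lip])
  then have K: "K \<ge> 0"
    using False by (simp add: zero_le_mult_iff)
  have "norm (\<phi>' t 1) \<le> norm (y - x) * norm (G (\<gamma> t) - G x)"
    unfolding \<phi>'_def by (simp add: Cauchy_Schwarz_ineq2)
  also have "\<dots> \<le> norm (y - x) * (K * (t * norm (y - x)))"
    using lip[of "\<gamma> t" x] t by (intro mult_left_mono) (auto simp: \<gamma>_def)
  also have "\<dots> \<le> K * (norm (y - x))\<^sup>2"
    using t K by (simp add: power2_eq_square mult_left_le_one_le mult_left_mono mult.left_commute)
  finally show ?thesis
    using mvt unfolding \<phi>_def \<gamma>_def by simp
qed

lemma GDERIV_quadratic_remainderI:
  fixes f :: "'a::real_inner \<Rightarrow> real"
  assumes K: "K \<ge> 0" and rem: "\<And>y. \<bar>f y - f x - (y - x) \<bullet> g\<bar> \<le> K * (norm (y - x))\<^sup>2"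
  shows "GDERIV f x :> g"
  unfolding gderiv_def has_derivative_at_alt
proof (intro conjI allI impI bounded_linear_inner_left)
  fix e :: real
  assume e: "e > 0"
  show "\<exists>d>0. \<forall>y. norm (y - x) < d \<longrightarrow> norm (f y - f x - (y - x) \<bullet> g) \<le> e * norm (y - x)"
  proof (intro exI[of _ "e / (K + 1)"] conjI allI impI)
    show "e / (K + 1) > 0" using e K by simp
    fix y
    assume "norm (y - x) < e / (K + 1)"
    then have "K * norm (y - x) + norm (y - x) < e"
      using K by (simp add: field_simps)
    then have "K * norm (y - x) \<le> e"
      using norm_ge_zero[of "y - x"] by linarith
    then have "K * (norm (y - x))\<^sup>2 \<le> e * norm (y - x)"
      by (simp add: power2_eq_square mult_right_mono flip: mult.assoc)
    then show "norm (f y - f x - (y - x) \<bullet> g) \<le> e * norm (y - x)"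
      using rem[of y] by simp
  qed
qed

lemma GDERIV_symmetric_diagonal:
  fixes W :: "'a::euclidean_space \<Rightarrow> 'a \<Rightarrow> real"
  assumes grad: "\<And>z w. GDERIV (\<lambda>z'. W z' w) z :> G z w"
    and sym: "\<And>z w. W z w = W w z"
    and lip: "\<And>z w z' w'. norm (G z w - G z' w') \<le> K * (norm (z - z') + norm (w - w'))"
    and K: "K \<ge> 0"
  shows "GDERIV (\<lambda>z. W z z) z :> 2 *\<^sub>R G z z"
proof (rule GDERIV_quadratic_remainderI[of "3 * K"])
  fix y
  have lip1: "norm (G a w - G a' w) \<le> K * norm (a - a')" for a a' w
    using lip[of a w a' w] by simp
  have first: "\<bar>W y y - W z y - (y - z) \<bullet> G z y\<bar> \<le> K * (norm (y - z))\<^sup>2"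
    by (rule gderiv_lipschitz_remainder_bound[where f = "\<lambda>a. W a y", OF grad lip1])
  have second: "\<bar>W y z - W z z - (y - z) \<bullet> G z z\<bar> \<le> K * (norm (y - z))\<^sup>2"
    by (rule gderiv_lipschitz_remainder_bound[where f = "\<lambda>a. W a z", OF grad lip1])
  have "\<bar>(y - z) \<bullet> (G z y - G z z)\<bar> \<le> norm (y - z) * (K * norm (y - z))"
    using lip[of z y z z] by (intro order_trans[OF Cauchy_Schwarz_ineq2] mult_left_mono) auto
  then have cross: "\<bar>(y - z) \<bullet> G z y - (y - z) \<bullet> G z z\<bar> \<le> K * (norm (y - z))\<^sup>2"
    by (simp add: inner_diff_right power2_eq_square mult.left_commute)
  \<comment> \<open>By symmetry, W y y - W z z = (W y y - W z y) + (W y z - W z z), a sum of two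
    increments in the first argument.\<close>
  show "\<bar>W y y - W z z - (y - z) \<bullet> 2 *\<^sub>R G z z\<bar> \<le> 3 * K * (norm (y - z))\<^sup>2"
    using first second cross sym[of z y] by simp
qed (use K in simp)

lemma GDERIV_sum:
  assumes "\<And>k. k \<in> S \<Longrightarrow> GDERIV (f k) x :> g k"
  shows "GDERIV (\<lambda>z. \<Sum>k\<in>S. f k z) x :> (\<Sum>k\<in>S. g k)"
  using assms unfolding gderiv_def inner_sum_right by (rule has_derivative_sum)

lemma GDERIV_cmult:
  assumes "GDERIV f x :> g"
  shows "GDERIV (\<lambda>z. c * f z) x :> c *\<^sub>R g"
  using GDERIV_mult[OF GDERIV_const assms] by simp

lemma GDERIV_unique:
  assumes "GDERIV f x :> g" and "GDERIV f x :> g'"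
  shows "g = g'"
proof -
  have "(\<lambda>h. h \<bullet> g) = (\<lambda>h. h \<bullet> g')"
    using has_derivative_unique assms unfolding gderiv_def by blast
  then have "(g - g') \<bullet> (g - g') = 0"
    by (metis inner_diff_left inner_diff_right diff_self inner_commute)
  then show ?thesis by simp
qed

lemma tnorm2_has_real_derivative:
  fixes a b :: "real \<Rightarrow> 'a::real_inner"
  assumes a: "(a has_vector_derivative a') (at t within T)"
    and b: "(b has_vector_derivative b') (at t within T)"
  shows "((\<lambda>s. tnorm2 Le (a s) (b s)) has_real_derivative 2 * (a t \<bullet> a') + 2 * (b t \<bullet> b') / Le)
    (at t within T)"
  using a b
  unfolding tnorm2_def power2_norm_eq_inner has_vector_derivative_def has_field_derivative_def
    divide_inverse
  by (auto intro!: derivative_eq_intros simp: inner_commute algebra_simps)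

lemma tnorm2_derivative_estimate:
  fixes dq dp dF :: "'a::real_inner"
  assumes a: "a > 0" and b: "0 \<le> b" "b \<le> a"
    and dF: "norm dF \<le> a * norm dq + b * m" and m: "m\<^sup>2 \<le> Q"
  shows "2 * (dq \<bullet> dp) + 2 * (dp \<bullet> dF) / (a + b)
    \<le> 2 * sqrt (a + b) * tnorm2 (a + b) dq dp + sqrt (a + b) / 2 * Q"
proof -
  \<comment> \<open>AM-GM in the variables A = |dq| and \<beta> = |dp| / sqrt (a + b), which makes both terms of
    tnorm2 appear with weight 1; the mean-field term enters with weight b / (a + b) \<le> 1/2.\<close>
  define c where "c = sqrt (a + b)"
  define A where "A = norm dq"
  define \<beta> where "\<beta> = norm dp / c"
  have c: "c > 0" "c\<^sup>2 = a + b"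
    using a b by (auto simp: c_def)
  have dp: "norm dp = c * \<beta>"
    using c by (simp add: \<beta>_def)
  have \<beta>: "\<beta> \<ge> 0"
    using c by (simp add: \<beta>_def)
  have "2 * (dq \<bullet> dp) + 2 * (dp \<bullet> dF) / (a + b) \<le> 2 * A * norm dp + 2 * norm dp * (a * A + b * m) / c\<^sup>2"
  proof -
    have "dp \<bullet> dF \<le> norm dp * (a * A + b * m)"
      using norm_cauchy_schwarz[of dp dF] dF unfolding A_def
      by (meson mult_left_mono norm_ge_zero order_trans)
    then have "2 * (dp \<bullet> dF) / (a + b) \<le> 2 * norm dp * (a * A + b * m) / c\<^sup>2"
      using a b c by (simp add: divide_right_mono)
    then show ?thesis
      using norm_cauchy_schwarz[of dq dp] unfolding A_def by linarith
  qed
  also have "\<dots> = c * (2 * A * \<beta> * (1 + a / c\<^sup>2) + (b / c\<^sup>2) * (2 * \<beta> * m))"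
    using c(1) unfolding dp by (simp add: field_simps power2_eq_square)
  also have "\<dots> \<le> c * (2 * A\<^sup>2 + 2 * \<beta>\<^sup>2 + Q / 2)"
  proof (rule mult_left_mono)
    have "2 * A * \<beta> * (1 + a / c\<^sup>2) \<le> (A\<^sup>2 + \<beta>\<^sup>2) * (1 + a / c\<^sup>2)"
      using sum_squares_bound[of A \<beta>] a c(1) by (intro mult_right_mono) auto
    moreover have "(b / c\<^sup>2) * (2 * \<beta> * m) \<le> (b / c\<^sup>2) * (\<beta>\<^sup>2 + Q)"
      using sum_squares_bound[of \<beta> m] m b c(1) by (intro mult_left_mono) auto
    moreover have "(A\<^sup>2 + \<beta>\<^sup>2) * (1 + a / c\<^sup>2) + (b / c\<^sup>2) * (\<beta>\<^sup>2 + Q) \<le> 2 * A\<^sup>2 + 2 * \<beta>\<^sup>2 + Q / 2"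
    proof -
      define \<gamma> where "\<gamma> = b / c\<^sup>2"
      have a_eq: "a / c\<^sup>2 = 1 - \<gamma>" and \<gamma>: "0 \<le> \<gamma>" "\<gamma> \<le> 1/2"
        using a b c by (simp_all add: \<gamma>_def field_simps)
      have "0 \<le> Q"
        using order_trans[OF zero_le_power2 m] .
      then have "\<gamma> * Q \<le> Q / 2"
        using mult_right_mono[OF \<gamma>(2)] by simp
      moreover have "0 \<le> \<gamma> * A\<^sup>2"
        using \<gamma> by simp
      ultimately show ?thesis
        unfolding a_eq \<gamma>_def[symmetric] by (simp add: algebra_simps)
    qed
    ultimately show "2 * A * \<beta> * (1 + a / c\<^sup>2) + (b / c\<^sup>2) * (2 * \<beta> * m) \<le> 2 * A\<^sup>2 + 2 * \<beta>\<^sup>2 + Q / 2"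
      by linarith
  qed (use c in simp)
  also have "\<dots> = 2 * c * tnorm2 (a + b) dq dp + c / 2 * Q"
    using a b c unfolding tnorm2_def A_def dp by (simp add: field_simps power2_eq_square)
  finally show ?thesis
    unfolding c_def .
qed

lemma squared_mean_le_mean_of_squares:
  fixes f :: "'b \<Rightarrow> real"
  assumes "finite I"
  shows "((\<Sum>i\<in>I. f i) / card I)\<^sup>2 \<le> (\<Sum>i\<in>I. (f i)\<^sup>2) / card I"
proof (cases "I = {}")
  case True
  then show ?thesis by simp
next
  case False
  then have I: "real (card I) > 0"
    using assms by (simp add: card_gt_0_iff)
  have "((\<Sum>i\<in>I. f i) / card I)\<^sup>2 = (\<Sum>i\<in>I. f i)\<^sup>2 / (card I)\<^sup>2"
    by (simp add: power_divide)
  also have "\<dots> \<le> (\<Sum>i\<in>I. (f i)\<^sup>2) * card I / (card I)\<^sup>2"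
    using sum_squared_le_sum_of_squares[of f I] by (intro divide_right_mono) auto
  also have "\<dots> = (\<Sum>i\<in>I. (f i)\<^sup>2) / card I"
    using I by (simp add: power2_eq_square)
  finally show ?thesis .
qed

lemma nonpos_derivative_imp_le_initial:
  fixes \<phi> :: "real \<Rightarrow> real"
  assumes deriv: "\<And>t. t \<in> {0..h} \<Longrightarrow>
      \<exists>D. (\<phi> has_real_derivative D) (at t within {0..h}) \<and> D \<le> 0"
    and s: "s \<in> {0..h}"
  shows "\<phi> s \<le> \<phi> 0"
proof (rule DERIV_nonpos_imp_decreasing_open[of 0 s \<phi>])
  show "0 \<le> s" using s by simp
  have "continuous_on {0..h} \<phi>"
    using deriv DERIV_continuous continuous_on_eq_continuous_within by blast
  then show "continuous_on {0..s} \<phi>"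
    by (rule continuous_on_subset) (use s in auto)
  fix t
  assume t: "0 < t" "t < s"
  then have "at t within {0..h} = at t"
    using s by (intro at_within_Icc_at) auto
  then show "\<exists>D. (\<phi> has_real_derivative D) (at t) \<and> D \<le> 0"
    using deriv[of t] t s by auto
qed

lemma linear_gronwall_Icc:
  fixes \<phi> :: "real \<Rightarrow> real"
  assumes deriv: "\<And>t. t \<in> {0..h} \<Longrightarrow>
      \<exists>D. (\<phi> has_real_derivative D) (at t within {0..h}) \<and> D \<le> k * \<phi> t + B"
    and k: "k > 0" and s: "s \<in> {0..h}"
  shows "\<phi> s + B / k \<le> exp (k * s) * (\<phi> 0 + B / k)"
proof -
  define \<psi> where "\<psi> t = exp (- k * t) * (\<phi> t + B / k)" for t
  have "\<psi> s \<le> \<psi> 0"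
  proof (rule nonpos_derivative_imp_le_initial[OF _ s])
    fix t
    assume t: "t \<in> {0..h}"
    then obtain D where D: "(\<phi> has_real_derivative D) (at t within {0..h})" "D \<le> k * \<phi> t + B"
      using deriv by blast
    have "(\<psi> has_real_derivative exp (- k * t) * (D - k * \<phi> t - B)) (at t within {0..h})"
      unfolding \<psi>_def using k
      by (auto intro!: derivative_eq_intros D(1) simp: field_simps)
    moreover have "exp (- k * t) * (D - k * \<phi> t - B) \<le> 0"
      using D(2) by (simp add: mult_nonneg_nonpos)
    ultimately show "\<exists>D. (\<psi> has_real_derivative D) (at t within {0..h}) \<and> D \<le> 0"
      by blast
  qed
  then show ?thesis
    unfolding \<psi>_def by (simp add: exp_minus field_simps)
qed

lemma exp_growth_estimate:
  fixes \<tau> :: real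
  assumes "0 \<le> \<tau>" and "\<tau> \<le> 1/3"
  shows "exp (2 * \<tau>) + (exp (2 * \<tau>) - 1) * exp (5/2 * \<tau>) / 4 \<le> 1 + 7 * \<tau>"
proof -
  have "exp (2 * \<tau>) \<le> 1 + 2 * \<tau> + (2 * \<tau>)\<^sup>2"
    using assms by (intro exp_bound) auto
  also have "\<dots> \<le> 1 + 4 * \<tau>"
    using mult_left_mono[of \<tau> "1/3" \<tau>] assms by (simp add: power2_eq_square)
  finally have exp2: "exp (2 * \<tau>) \<le> 1 + 4 * \<tau>" .
  have "exp (5/2 * \<tau>) \<le> exp 1"
    using assms by simp
  then have exp52: "exp (5/2 * \<tau>) \<le> 3"
    using exp_le by linarith
  have "(exp (2 * \<tau>) - 1) * exp (5/2 * \<tau>) \<le> (4 * \<tau>) * 3"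
    using exp2 exp52 assms by (intro mult_mono) auto
  then show ?thesis
    using exp2 by linarith
qed

lemma coupled_gronwall_sum_bound:
  fixes E :: "nat \<Rightarrow> real \<Rightarrow> real"
  assumes deriv: "\<And>i t. i < N \<Longrightarrow> t \<in> {0..h} \<Longrightarrow>
      \<exists>D. (E i has_real_derivative D) (at t within {0..h})
        \<and> D \<le> 2 * c * E i t + c / 2 * (\<Sum>j<N. E j t) / N"
    and c: "c > 0" and s: "s \<in> {0..h}"
  shows "(\<Sum>j<N. E j s) \<le> exp (5/2 * c * s) * (\<Sum>j<N. E j 0)"
proof (cases "N = 0")
  case True
  then show ?thesis by simp
next
  case False
  then have N: "real N > 0" by simp
  define S where "S t = (\<Sum>j<N. E j t)" for t
  have "S s + 0 / (5/2 * c) \<le> exp (5/2 * c * s) * (S 0 + 0 / (5/2 * c))"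
  proof (rule linear_gronwall_Icc[OF _ _ s])
    fix t
    assume t: "t \<in> {0..h}"
    obtain D where D: "\<And>i. i < N \<Longrightarrow> (E i has_real_derivative D i) (at t within {0..h})
        \<and> D i \<le> 2 * c * E i t + c / 2 * S t / N"
      using deriv[OF _ t] unfolding S_def by metis
    have "(S has_real_derivative (\<Sum>i<N. D i)) (at t within {0..h})"
      unfolding S_def[abs_def] using D by (intro DERIV_sum) auto
    moreover have "(\<Sum>i<N. D i) \<le> (\<Sum>i<N. 2 * c * E i t + c / 2 * S t / N)"
      using D by (intro sum_mono) auto
    moreover have "(\<Sum>i<N. 2 * c * E i t + c / 2 * S t / N) = 2 * c * S t + N * (c / 2 * S t / N)"
      by (simp add: S_def sum.distrib sum_distrib_left)
    moreover have "\<dots> = 5/2 * c * S t + 0"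
      using N by simp
    ultimately show "\<exists>D. (S has_real_derivative D) (at t within {0..h}) \<and> D \<le> 5/2 * c * S t + 0"
      by auto
  qed (use c in simp)
  then show ?thesis
    by (simp add: S_def)
qed

lemma coupled_gronwall_sum_SUP:
  fixes E :: "nat \<Rightarrow> real \<Rightarrow> real"
  assumes deriv: "\<And>i t. i < N \<Longrightarrow> t \<in> {0..h} \<Longrightarrow>
      \<exists>D. (E i has_real_derivative D) (at t within {0..h})
        \<and> D \<le> 2 * c * E i t + c / 2 * (\<Sum>j<N. E j t) / N"
    and nonneg: "\<And>i. i < N \<Longrightarrow> E i 0 \<ge> 0"
    and c: "c > 0" and h: "h \<ge> 0" and ch: "c * h \<le> 1/3"
  shows "(\<Sum>i<N. SUP t\<in>{0..h}. E i t) \<le> (1 + 7 * c * h) * (\<Sum>i<N. E i 0)"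
proof (cases "N = 0")
  case True
  then show ?thesis by simp
next
  case False
  then have N: "real N > 0" by simp
  define S where "S t = (\<Sum>j<N. E j t)" for t
  have S0: "S 0 \<ge> 0"
    unfolding S_def using nonneg by (auto intro: sum_nonneg)
  have total: "S t \<le> exp (5/2 * c * h) * S 0" if t: "t \<in> {0..h}" for t
  proof -
    have "S t \<le> exp (5/2 * c * t) * S 0"
      unfolding S_def using coupled_gronwall_sum_bound[OF deriv c t] .
    also have "\<dots> \<le> exp (5/2 * c * h) * S 0"
      using t c S0 by (auto intro!: mult_right_mono)
    finally show ?thesis .
  qed
  define M where "M = exp (5/2 * c * h) * S 0 / N"
  have M: "M \<ge> 0"
    using S0 N by (simp add: M_def)
  have single: "E i s \<le> exp (2 * c * h) * (E i 0 + M / 4) - M / 4"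
    if i: "i < N" and s: "s \<in> {0..h}" for i s
  proof -
    have "E i s + c / 2 * M / (2 * c) \<le> exp (2 * c * s) * (E i 0 + c / 2 * M / (2 * c))"
    proof (rule linear_gronwall_Icc[OF _ _ s])
      fix t
      assume t: "t \<in> {0..h}"
      have "c / 2 * S t / N \<le> c / 2 * M"
        using total[OF t] c N by (simp add: M_def divide_right_mono)
      then show "\<exists>D. (E i has_real_derivative D) (at t within {0..h}) \<and> D \<le> 2 * c * E i t + c / 2 * M"
        using deriv[OF i t] unfolding S_def by (meson add_left_mono order_trans)
    qed (use c in simp)
    also have "\<dots> \<le> exp (2 * c * h) * (E i 0 + c / 2 * M / (2 * c))"
      using s c nonneg[OF i] M by (auto intro!: mult_right_mono)
    finally show ?thesis
      using c by simp
  qed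
  have "(\<Sum>i<N. SUP t\<in>{0..h}. E i t) \<le> (\<Sum>i<N. exp (2 * c * h) * (E i 0 + M / 4) - M / 4)"
    using h by (intro sum_mono cSUP_least single) auto
  also have "\<dots> = exp (2 * c * h) * S 0 + (exp (2 * c * h) - 1) * (N * M) / 4"
    unfolding S_def by (simp add: sum_subtractf sum.distrib flip: sum_distrib_left) (simp add: field_simps)
  also have "\<dots> = (exp (2 * (c * h)) + (exp (2 * (c * h)) - 1) * exp (5/2 * (c * h)) / 4) * S 0"
    using N by (simp add: M_def algebra_simps)
  also have "\<dots> \<le> (1 + 7 * (c * h)) * S 0"
    using exp_growth_estimate[of "c * h"] c h ch S0 by (intro mult_right_mono) auto
  finally show ?thesis
    by (simp add: S_def mult.assoc)
qed

definition Upot_partial_grad :: "('a::euclidean_space \<Rightarrow> 'a) \<Rightarrow> ('a \<Rightarrow> 'a \<Rightarrow> 'a) \<Rightarrow> real \<Rightarrow> nat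
    \<Rightarrow> (nat \<Rightarrow> 'a) \<Rightarrow> nat \<Rightarrow> 'a" where
  "Upot_partial_grad gradV gradW1 eps N x i = gradV (x i) + (eps / real N) *\<^sub>R (\<Sum>j<N. gradW1 (x i) (x j))"

locale mean_field_potential =
  fixes V :: "'a::euclidean_space \<Rightarrow> real" and gradV :: "'a \<Rightarrow> 'a"
    and W :: "'a \<Rightarrow> 'a \<Rightarrow> real" and gradW1 :: "'a \<Rightarrow> 'a \<Rightarrow> 'a"
    and eps L Lt :: real
  assumes eps_nonneg: "eps \<ge> 0" and L_pos: "L > 0" and Lt_nonneg: "Lt \<ge> 0"
    and gradV: "\<And>z. GDERIV V z :> gradV z"
    and gradV_lipschitz: "\<And>z z'. norm (gradV z - gradV z') \<le> L * norm (z - z')"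
    and gradW1: "\<And>z w. GDERIV (\<lambda>z'. W z' w) z :> gradW1 z w"
    and W_sym: "\<And>z w. W z w = W w z"
    and gradW1_lipschitz:
      "\<And>z w z' w'. norm (gradW1 z w - gradW1 z' w') \<le> Lt * (norm (z - z') + norm (w - w'))"
begin

abbreviation Le :: real where
  "Le \<equiv> L + 2 * eps * Lt"

lemma Le_pos: "Le > 0"
  using L_pos eps_nonneg Lt_nonneg by (simp add: add_pos_nonneg)

abbreviation gradU :: "nat \<Rightarrow> (nat \<Rightarrow> 'a) \<Rightarrow> nat \<Rightarrow> 'a" where
  "gradU N \<equiv> Upot_partial_grad gradV gradW1 eps N"

lemma GDERIV_W_update:
  "GDERIV (\<lambda>z. W ((x(i := z)) k) ((x(i := z)) j)) (x i) :>
    (if k = i then gradW1 (x i) (x j) else 0) + (if j = i then gradW1 (x i) (x k) else 0)"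
proof (cases "k = i"; cases "j = i")
  assume "k = i" "j = i"
  then show ?thesis
    using GDERIV_symmetric_diagonal[OF gradW1 W_sym gradW1_lipschitz Lt_nonneg]
    by (simp add: scaleR_2)
next
  assume "k = i" "j \<noteq> i"
  then show ?thesis
    using gradW1 by simp
next
  assume "k \<noteq> i" "j = i"
  then show ?thesis
    using gradW1[where z = "x i" and w = "x k"] by (simp add: W_sym)
next
  assume "k \<noteq> i" "j \<noteq> i"
  then show ?thesis
    using GDERIV_const by simp
qed

lemma GDERIV_Upot:
  assumes i: "i < N"
  shows "GDERIV (\<lambda>z. Upot V W eps N (x(i := z))) (x i) :> gradU N x i"
proof -
  have pairs_sum: "(\<Sum>k<N. \<Sum>j<N. (if k = i then gradW1 (x i) (x j) else 0)
      + (if j = i then gradW1 (x i) (x k) else 0)) = 2 *\<^sub>R (\<Sum>j<N. gradW1 (x i) (x j))"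
  proof -
    have "(\<Sum>k<N. \<Sum>j<N. if k = i then gradW1 (x i) (x j) else 0)
        = (\<Sum>k<N. if k = i then (\<Sum>j<N. gradW1 (x i) (x j)) else 0)"
      by (rule sum.cong) auto
    then show ?thesis
      using i by (simp add: sum.distrib scaleR_2)
  qed
  have "GDERIV (\<lambda>z. Upot V W eps N (x(i := z))) (x i) :>
     (\<Sum>k<N. (if k = i then gradV (x i) else 0) + (eps / (2 * real N)) *\<^sub>R
        (\<Sum>j<N. (if k = i then gradW1 (x i) (x j) else 0) + (if j = i then gradW1 (x i) (x k) else 0)))"
    unfolding Upot_def
    by (intro GDERIV_sum GDERIV_add GDERIV_cmult GDERIV_W_update) (simp add: gradV GDERIV_const)
  also have "\<dots> = gradV (x i) + (eps / (2 * real N)) *\<^sub>R (2 *\<^sub>R (\<Sum>j<N. gradW1 (x i) (x j)))"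
    using i
    unfolding sum.distrib[of "\<lambda>k. if k = i then gradV (x i) else 0"] scaleR_sum_right[symmetric]
      pairs_sum
    by simp
  also have "\<dots> = gradU N x i"
    by (simp add: Upot_partial_grad_def)
  finally show ?thesis .
qed

lemma Upot_partial_grad_lipschitz:
  assumes i: "i < N"
  shows "norm (gradU N x i - gradU N y i)
     \<le> (L + eps * Lt) * norm (x i - y i) + eps * Lt * ((\<Sum>j<N. norm (x j - y j)) / N)"
proof -
  have N: "real N > 0"
    using i by simp
  define G where "G = (\<Sum>j<N. gradW1 (x i) (x j) - gradW1 (y i) (y j))"
  have "norm G \<le> (\<Sum>j<N. Lt * (norm (x i - y i) + norm (x j - y j)))"
    unfolding G_def by (rule order_trans[OF norm_sum sum_mono]) (rule gradW1_lipschitz)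
  also have "\<dots> = N * Lt * norm (x i - y i) + Lt * (\<Sum>j<N. norm (x j - y j))"
    by (simp add: distrib_left sum.distrib sum_distrib_left)
  finally have interaction: "norm G \<le> N * Lt * norm (x i - y i) + Lt * (\<Sum>j<N. norm (x j - y j))" .
  have "gradU N x i - gradU N y i = (gradV (x i) - gradV (y i)) + (eps / N) *\<^sub>R G"
    by (simp add: Upot_partial_grad_def G_def sum_subtractf scaleR_diff_right)
  then have "norm (gradU N x i - gradU N y i)
      \<le> norm (gradV (x i) - gradV (y i)) + norm ((eps / N) *\<^sub>R G)"
    by (simp only: norm_triangle_ineq)
  also have "\<dots> = norm (gradV (x i) - gradV (y i)) + eps / N * norm G"
    using eps_nonneg by simp
  also have "\<dots> \<le> L * norm (x i - y i)
      + eps / N * (N * Lt * norm (x i - y i) + Lt * (\<Sum>j<N. norm (x j - y j)))"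
    using gradV_lipschitz interaction eps_nonneg by (intro add_mono mult_left_mono) auto
  also have "\<dots> = (L + eps * Lt) * norm (x i - y i) + eps * Lt * ((\<Sum>j<N. norm (x j - y j)) / N)"
    using N by (simp add: field_simps)
  finally show ?thesis .
qed

lemma is_flow_momentum_derivative:
  assumes flow: "is_flow V W eps N h q p x v" and t: "t \<in> {0..h}" and i: "i < N"
  shows "((\<lambda>s. p s i) has_vector_derivative - gradU N (q t) i) (at t within {0..h})"
proof -
  from flow t i obtain g where g: "GDERIV (\<lambda>z. Upot V W eps N ((q t)(i := z))) (q t i) :> g"
    and p: "((\<lambda>s. p s i) has_vector_derivative - g) (at t within {0..h})"
    unfolding is_flow_def by blast
  have "g = gradU N (q t) i"
    using GDERIV_unique[OF g GDERIV_Upot[OF i]] .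
  with p show ?thesis by simp
qed

lemma flow_distance_has_derivative:
  assumes flow1: "is_flow V W eps N h q1 p1 x v" and flow2: "is_flow V W eps N h q2 p2 y u"
    and t: "t \<in> {0..h}" and i: "i < N"
  shows "((\<lambda>s. tnorm2 Le (q1 s i - q2 s i) (p1 s i - p2 s i)) has_real_derivative
      2 * ((q1 t i - q2 t i) \<bullet> (p1 t i - p2 t i))
      + 2 * ((p1 t i - p2 t i) \<bullet> (gradU N (q2 t) i - gradU N (q1 t) i)) / Le) (at t within {0..h})"
proof (rule tnorm2_has_real_derivative)
  have "((\<lambda>s. q1 s i) has_vector_derivative p1 t i) (at t within {0..h})"
    and "((\<lambda>s. q2 s i) has_vector_derivative p2 t i) (at t within {0..h})"
    using flow1 flow2 t i unfolding is_flow_def by blast+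
  then show "((\<lambda>s. q1 s i - q2 s i) has_vector_derivative p1 t i - p2 t i) (at t within {0..h})"
    by (rule has_vector_derivative_diff)
  show "((\<lambda>s. p1 s i - p2 s i) has_vector_derivative gradU N (q2 t) i - gradU N (q1 t) i) (at t within {0..h})"
    using has_vector_derivative_diff[OF is_flow_momentum_derivative[OF flow1 t i]
        is_flow_momentum_derivative[OF flow2 t i]] by simp
qed

lemma flow_distance_derivative_bound:
  assumes flow1: "is_flow V W eps N h q1 p1 x v" and flow2: "is_flow V W eps N h q2 p2 y u"
    and t: "t \<in> {0..h}" and i: "i < N"
  defines "E \<equiv> \<lambda>j s. tnorm2 Le (q1 s j - q2 s j) (p1 s j - p2 s j)"
  shows "\<exists>D. (E i has_real_derivative D) (at t within {0..h})
    \<and> D \<le> 2 * sqrt Le * E i t + sqrt Le / 2 * (\<Sum>j<N. E j t) / N"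
proof -
  define dq where "dq j = q1 t j - q2 t j" for j
  define Q where "Q = (\<Sum>j<N. (norm (dq j))\<^sup>2) / N"
  have Le_split: "Le = (L + eps * Lt) + eps * Lt"
    by simp
  have "2 * (dq i \<bullet> (p1 t i - p2 t i))
      + 2 * ((p1 t i - p2 t i) \<bullet> (gradU N (q2 t) i - gradU N (q1 t) i)) / Le
      \<le> 2 * sqrt Le * E i t + sqrt Le / 2 * Q"
    unfolding E_def dq_def[symmetric] Le_split
  proof (rule tnorm2_derivative_estimate)
    show "norm (gradU N (q2 t) i - gradU N (q1 t) i)
        \<le> (L + eps * Lt) * norm (dq i) + eps * Lt * ((\<Sum>j<N. norm (dq j)) / N)"
      using Upot_partial_grad_lipschitz[OF i, of "q1 t" "q2 t"]
      by (simp add: norm_minus_commute dq_def)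
    show "((\<Sum>j<N. norm (dq j)) / N)\<^sup>2 \<le> Q"
      using squared_mean_le_mean_of_squares[of "{..<N}" "\<lambda>j. norm (dq j)"] by (simp add: Q_def)
  qed (use L_pos eps_nonneg Lt_nonneg in \<open>simp_all add: add_pos_nonneg\<close>)
  moreover have "sqrt Le / 2 * Q \<le> sqrt Le / 2 * (\<Sum>j<N. E j t) / N"
  proof -
    have "(norm (dq j))\<^sup>2 \<le> E j t" for j
      unfolding E_def tnorm2_def dq_def using Le_pos by simp
    then have "Q \<le> (\<Sum>j<N. E j t) / N"
      unfolding Q_def by (intro divide_right_mono sum_mono) auto
    then have "sqrt Le / 2 * Q \<le> sqrt Le / 2 * ((\<Sum>j<N. E j t) / N)"
      using Le_pos by (intro mult_left_mono) simp_all
    then show ?thesis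
      by simp
  qed
  ultimately show ?thesis
    using flow_distance_has_derivative[OF flow1 flow2 t i] unfolding E_def dq_def
    by (meson add_left_mono order_trans)
qed

lemma flow_distance_SUP_bound:
  assumes h: "h > 0" and hLe: "Le * h\<^sup>2 \<le> 1 / 9"
    and flow1: "is_flow V W eps N h q1 p1 x v" and flow2: "is_flow V W eps N h q2 p2 y u"
  shows "(\<Sum>l<N. SUP s\<in>{0..h}. tnorm2 Le (q1 s l - q2 s l) (p1 s l - p2 s l))
    \<le> (1 + 7 * sqrt Le * h) * (\<Sum>l<N. tnorm2 Le (x l - y l) (v l - u l))"
proof -
  have "sqrt Le * h = sqrt (Le * h\<^sup>2)"
    using h by (simp add: real_sqrt_mult)
  also have "\<dots> \<le> sqrt (1 / 9)"
    using hLe by (rule real_sqrt_le_mono)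
  also have "sqrt (1 / 9) = (1 / 3 :: real)"
    by (rule real_sqrt_unique) (simp_all add: power2_eq_square)
  finally have "sqrt Le * h \<le> 1 / 3" .
  then have "(\<Sum>l<N. SUP s\<in>{0..h}. tnorm2 Le (q1 s l - q2 s l) (p1 s l - p2 s l))
      \<le> (1 + 7 * sqrt Le * h) * (\<Sum>l<N. tnorm2 Le (q1 0 l - q2 0 l) (p1 0 l - p2 0 l))"
    using flow_distance_derivative_bound[OF flow1 flow2] Le_pos h
    by (intro coupled_gronwall_sum_SUP) (auto simp: tnorm2_def)
  also have "(\<Sum>l<N. tnorm2 Le (q1 0 l - q2 0 l) (p1 0 l - p2 0 l))
      = (\<Sum>l<N. tnorm2 Le (x l - y l) (v l - u l))"
    using flow1 flow2 unfolding is_flow_def by simp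
  finally show ?thesis .
qed

end

theorem mainTheorem13:
  fixes V :: "'a::euclidean_space \<Rightarrow> real" and gradV :: "'a \<Rightarrow> 'a"
    and W :: "'a \<Rightarrow> 'a \<Rightarrow> real" and gradW1 :: "'a \<Rightarrow> 'a \<Rightarrow> 'a"
    and eps L Lt h :: real and N :: nat
    and q1 p1 q2 p2 :: "real \<Rightarrow> nat \<Rightarrow> 'a" and x v y u :: "nat \<Rightarrow> 'a"
  assumes eps: "eps \<ge> 0" and L: "L > 0" and Lt: "Lt \<ge> 0"
    and gradV: "\<And>z. GDERIV V z :> gradV z"
    and V0: "V 0 = 0" and Vnn: "\<And>z. V z \<ge> 0"
    and VLip: "\<And>z z'. norm (gradV z - gradV z') \<le> L * norm (z - z')"
    and gradW: "\<And>z w. GDERIV (\<lambda>z'. W z' w) z :> gradW1 z w"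
    and Wsym: "\<And>z w. W z w = W w z"
    and WLip: "\<And>z w z' w'. norm (gradW1 z w - gradW1 z' w') \<le> Lt * (norm (z - z') + norm (w - w'))"
    and h: "h > 0"
    and hLe: "(L + 2 * eps * Lt) * h\<^sup>2 \<le> 1 / 9"
    and flow1: "is_flow V W eps N h q1 p1 x v"
    and flow2: "is_flow V W eps N h q2 p2 y u"
  shows "(\<Sum>l<N. SUP s\<in>{0..h}. tnorm2 (L + 2 * eps * Lt) (q1 s l - q2 s l) (p1 s l - p2 s l))
     \<le> (1 + 7 * sqrt (L + 2 * eps * Lt) * h) *
        (\<Sum>l<N. tnorm2 (L + 2 * eps * Lt) (x l - y l) (v l - u l))"
proof -
  interpret mean_field_potential V gradV W gradW1 eps L Lt
    using eps L Lt gradV VLip gradW Wsym WLip by unfold_locales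
  show ?thesis
    using flow_distance_SUP_bound[OF h hLe flow1 flow2] .
qed

end
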